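(* Consider the multirate closed loop described in the context, with high-rate LTI plant $P_h$, low-rate LTI controller $K_l$, downsampler $\mathcal{S}_d$ and multirate zero-order-hold $\mathcal{H}_u$ (downsampling/upsampling factor $F\in\mathbb{N}$), and the LPTV closed-loop operators $$J_{LPTV}=\left(I+P_h\mathcal{H}_uK_l\mathcal{S}_d\right)^{-1}P_h,\qquad S_{LPTV}=\left(I+\mathcal{H}_uK_l\mathcal{S}_d P_h\right)^{-1},$$ so that $y_h=J_{LPTV}r_h$ and $u_h=S_{LPTV}r_h$. Let $\underline{J}=\mathcal{L}J_{LPTV}\mathcal{L}^{-1}$, $\underline{S}=\mathcal{L}S_{LPTV}\mathcal{L}^{-1}$, $\underline{P}=\mathcal{L}P_h\mathcal{L}^{-1}$ be the time-lifted representations and $\tilde{J}(z)=M(z)\underline{J}(z^F)M^{-1}(z)$, $\tilde{S}(z)=M(z)\underline{S}(z^F)M^{-1}(z)$, $\tilde{P}(z)=M(z)\underline{P}(z^F)M^{-1}(z)$ the frequency-lifted representations. Then $$\underline{P}=\underline{J}\,\underline{S}^{-1},\qquad \tilde{P}=\tilde{J}\,\tilde{S}^{-1}.$$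
   Context: All systems are discrete-time. The plant $P_h$ is a linear time-invariant (LTI) system operating at the high sampling rate with sampling time $h_h$; the controller $K_l$ is an LTI system operating at the low rate with sampling time $h_l=Fh_h$, $F\in\mathbb{N}$. The downsampler $\mathcal{S}_d$ maps a high-rate signal $\nu_h$ to the low-rate signal $\nu_l[l]=\nu_h[lF]$; the multirate zero-order-hold $\mathcal{H}_u$ maps a low-rate signal $\nu_l$ to the high-rate signal $\nu_h[t]=\nu_l[\lfloor t/F\rfloor]$. The closed loop is assumed well posed, so the inverses in $J_{LPTV}$ and $S_{LPTV}$ exist. The resulting operators are linear periodically time-varying (LPTV) with period $F$. The time-lifting operator $\mathcal{L}$ maps a signal $\nu_h[t]\in\mathbb{R}^{n}$ to $\underline{\nu}[l]=\begin{bmatrix}\nu_h^\top[lF] & \nu_h^\top[lF+1] & \cdots & \nu_h^\top[lF+F-1]\end{bmatrix}^\top\in\mathbb{R}^{Fn}$; it is invertible, and for an $F$-periodic LPTV operator $G$, $\mathcal{L}G\mathcal{L}^{-1}$ is LTI. With $z=e^{j\omega}$ and $\phi=e^{j2\pi/F}$, $M(z)$ is the $F\times F$ block matrix whose $(i,k)$ block ($i,k=0,\dots,F-1$) is $(z\phi^{i})^{-k}I$. *)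

theory Defs
  imports Complex_Main
    "HOL-Computational_Algebra.Formal_Laurent_Series"
    "Jordan_Normal_Form.Matrix"
    "Jordan_Normal_Form.Gauss_Jordan_Elimination"
begin

text \<open>A discrete-time signal with values in R^n is a map from time (nat) to
  real vectors of dimension n (zero initial conditions, one-sided time axis).\<close>

type_synonym signal = "nat \<Rightarrow> real vec"

definition sigs :: "nat \<Rightarrow> signal set" where
  "sigs n = {v. \<forall>t. v t \<in> carrier_vec n}"

text \<open>A (causal) LTI system with n_in inputs and n_out outputs, given by its
  impulse response (Markov parameters) G k, a n_out x n_in matrix; it acts by
  convolution.\<close>

definition is_kernel :: "nat \<Rightarrow> nat \<Rightarrow> (nat \<Rightarrow> real mat) \<Rightarrow> bool" where
  "is_kernel n_out n_in G \<longleftrightarrow> (\<forall>k. G k \<in> carrier_mat n_out n_in)"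

definition lti_op :: "nat \<Rightarrow> nat \<Rightarrow> (nat \<Rightarrow> real mat) \<Rightarrow> signal \<Rightarrow> signal" where
  "lti_op n_out n_in G v t =
     vec n_out (\<lambda>i. \<Sum>s\<le>t. \<Sum>j<n_in. G (t - s) $$ (i, j) * vec_index (v s) j)"

definition downsample :: "nat \<Rightarrow> signal \<Rightarrow> signal" where
  "downsample F v l = v (l * F)"

definition zoh :: "nat \<Rightarrow> signal \<Rightarrow> signal" where
  "zoh F v t = v (t div F)"

definition sig_add :: "signal \<Rightarrow> signal \<Rightarrow> signal" where
  "sig_add v w t = v t + w t"

text \<open>Plant P_h: m inputs, p outputs, kernel Pk (high rate).
  Controller K_l: p inputs, m outputs, kernel Kk (low rate).\<close>

definition loop_out :: "nat \<Rightarrow> nat \<Rightarrow> nat \<Rightarrow> (nat \<Rightarrow> real mat) \<Rightarrow> (nat \<Rightarrow> real mat)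
    \<Rightarrow> signal \<Rightarrow> signal" where
  "loop_out F m p Pk Kk v =
     sig_add v (lti_op p m Pk (zoh F (lti_op m p Kk (downsample F v))))"
  \<comment> \<open>I + P_h H_u K_l S_d (acting on output signals, dimension p)\<close>

definition loop_in :: "nat \<Rightarrow> nat \<Rightarrow> nat \<Rightarrow> (nat \<Rightarrow> real mat) \<Rightarrow> (nat \<Rightarrow> real mat)
    \<Rightarrow> signal \<Rightarrow> signal" where
  "loop_in F m p Pk Kk v =
     sig_add v (zoh F (lti_op m p Kk (downsample F (lti_op p m Pk v))))"
  \<comment> \<open>I + H_u K_l S_d P_h (acting on input signals, dimension m)\<close>

definition J_LPTV :: "nat \<Rightarrow> nat \<Rightarrow> nat \<Rightarrow> (nat \<Rightarrow> real mat) \<Rightarrow> (nat \<Rightarrow> real mat)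
    \<Rightarrow> signal \<Rightarrow> signal" where
  "J_LPTV F m p Pk Kk = inv_into (sigs p) (loop_out F m p Pk Kk) \<circ> lti_op p m Pk"

definition S_LPTV :: "nat \<Rightarrow> nat \<Rightarrow> nat \<Rightarrow> (nat \<Rightarrow> real mat) \<Rightarrow> (nat \<Rightarrow> real mat)
    \<Rightarrow> signal \<Rightarrow> signal" where
  "S_LPTV F m p Pk Kk = inv_into (sigs m) (loop_in F m p Pk Kk)"

text \<open>Lifting of an R^n-valued signal: block l collects samples lF, ..., lF+F-1;
  entry j*n + c of the lifted vector is component c of sample lF + j.\<close>

definition lift_sig :: "nat \<Rightarrow> nat \<Rightarrow> signal \<Rightarrow> signal" where
  "lift_sig n F v l = vec (F * n) (\<lambda>i. vec_index (v (l * F + i div n)) (i mod n))"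

definition unlift_sig :: "nat \<Rightarrow> nat \<Rightarrow> signal \<Rightarrow> signal" where
  "unlift_sig n F w t = vec n (\<lambda>c. vec_index (w (t div F)) ((t mod F) * n + c))"

definition lift_op :: "nat \<Rightarrow> nat \<Rightarrow> nat \<Rightarrow> (signal \<Rightarrow> signal) \<Rightarrow> signal \<Rightarrow> signal" where
  "lift_op F n_in n_out G = (\<lambda>w. lift_sig n_out F (G (unlift_sig n_in F w)))"

text \<open>Transfer matrix of an (LTI) operator with n_in inputs and n_out outputs,
  as a matrix of formal power series in the variable z^{-1} (impulse response).\<close>

definition impulse :: "nat \<Rightarrow> nat \<Rightarrow> signal" where
  "impulse n j t = (if t = 0 then unit_vec n j else 0\<^sub>v n)"

definition tf :: "nat \<Rightarrow> nat \<Rightarrow> (signal \<Rightarrow> signal) \<Rightarrow> complex fps mat" where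
  "tf n_in n_out G =
     mat n_out n_in (\<lambda>(i, j). Abs_fps (\<lambda>k. complex_of_real (vec_index (G (impulse n_in j) k) i)))"

text \<open>Transfer matrix evaluated at z^F, i.e. z^{-1} replaced by z^{-F}, viewed as
  formal Laurent series in z^{-1} (fls_X stands for z^{-1}).\<close>

definition tf_zF :: "nat \<Rightarrow> nat \<Rightarrow> nat \<Rightarrow> (signal \<Rightarrow> signal) \<Rightarrow> complex fls mat" where
  "tf_zF F n_in n_out G = map_mat (\<lambda>f. fps_to_fls (f oo fps_X ^ F)) (tf n_in n_out G)"

definition phi :: "nat \<Rightarrow> complex" where
  "phi F = cis (2 * pi / real F)"

text \<open>M(z): F x F block matrix with (i,k) block (z phi^i)^{-k} I_n = phi^{-ik} z^{-k} I_n.\<close>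

definition Mz :: "nat \<Rightarrow> nat \<Rightarrow> complex fls mat" where
  "Mz F n = mat (F * n) (F * n) (\<lambda>(r, c).
     if r mod n = c mod n
     then fls_const (inverse (phi F) ^ ((r div n) * (c div n))) * fls_X ^ (c div n)
     else 0)"

definition freq_lift :: "nat \<Rightarrow> nat \<Rightarrow> nat \<Rightarrow> (signal \<Rightarrow> signal) \<Rightarrow> complex fls mat" where
  "freq_lift F n_in n_out Gl =
     Mz F n_out * tf_zF F (F * n_in) (F * n_out) Gl * the (mat_inverse (Mz F n_in))"

end

theory Submission
  imports Defs "Jordan_Normal_Form.Determinant"
begin

text \<open>
  The push-through identity \<open>P (I + H K S P) = (I + P H K S) P\<close> gives \<open>J = P S\<close> on signals,
  i.e. \<open>P = J S\<^sup>-\<^sup>1\<close>, and time lifting is conjugation by the bijection \<open>lift_sig\<close>, so the identity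
  carries over to the lifted operators.
  After lifting, \<open>P\<^sub>h\<close> and \<open>H\<^sub>u K\<^sub>l S\<^sub>d\<close> are LTI with kernels \<open>B\<close> and \<open>A\<close>, so the
  transfer matrices satisfy \<open>T + A B T = I\<close> and \<open>J = B T\<close> for \<open>T = S(z\<^sup>F)\<close>; hence
  \<open>(I + A B) T = I\<close> and \<open>P = B = J T\<^sup>-\<^sup>1\<close>. Conjugation by \<open>M(z)\<close> preserves this; \<open>M(z)\<close> is
  inverted explicitly using the orthogonality of the \<open>F\<close>-th roots of unity.
\<close>

section \<open>Time lifting\<close>

lemma lti_op_in_sigs [simp]: "lti_op n_out n_in H v \<in> sigs n_out"
  by (simp add: sigs_def lti_op_def)

lemma lift_sig_in_sigs [simp]: "lift_sig n F v \<in> sigs (F * n)"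
  by (simp add: sigs_def lift_sig_def)

lemma unlift_sig_in_sigs [simp]: "unlift_sig n F w \<in> sigs n"
  by (simp add: sigs_def unlift_sig_def)

lemma dim_vec_sigs: "v \<in> sigs n \<Longrightarrow> dim_vec (v t) = n"
  by (simp add: sigs_def)

lemma dim_vec_lift_sig [simp]: "dim_vec (lift_sig n F v l) = F * n"
  by (simp add: lift_sig_def)

lemma index_lift_sig:
  "i < F * n \<Longrightarrow> lift_sig n F v l $ i = v (l * F + i div n) $ (i mod n)"
  by (simp add: lift_sig_def)

lemma index_unlift_sig:
  "c < n \<Longrightarrow> unlift_sig n F w t $ c = w (t div F) $ (t mod F * n + c)"
  by (simp add: unlift_sig_def)

lemma dim_vec_lti_op [simp]: "dim_vec (lti_op n_out n_in H v t) = n_out"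
  by (simp add: lti_op_def)

lemma lti_op_carrier [simp]: "lti_op n_out n_in H v t \<in> carrier_vec n_out"
  by (simp add: lti_op_def)

lemma index_lti_op:
  "i < n_out \<Longrightarrow> lti_op n_out n_in H v t $ i = (\<Sum>s\<le>t. \<Sum>j<n_in. H (t - s) $$ (i, j) * v s $ j)"
  by (simp add: lti_op_def)

lemma block_index_less:
  fixes b c n F :: nat
  assumes "c < n" "b < F"
  shows "b * n + c < F * n"
proof -
  have "b * n + c < Suc b * n" using assms by simp
  also have "\<dots> \<le> F * n" using assms by (intro mult_right_mono) auto
  finally show ?thesis .
qed

lemma div_less_of_less_mult: "(i :: nat) < F * n \<Longrightarrow> i div n < F"
  by (simp add: less_mult_imp_div_less mult.commute)

lemma sum_lessThan_mult_blocks: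
  "(\<Sum>c<F * n. g c) = (\<Sum>b<F. \<Sum>j<n. g (b * n + j :: nat))"
proof -
  have "(\<Sum>c<F * n. g c) = (\<Sum>b<F. sum g {b * n..<b * n + n})"
    by (rule sum.nat_group[symmetric])
  also have "\<dots> = (\<Sum>b<F. \<Sum>j<n. g (b * n + j))"
    by (simp add: sum.atLeastLessThan_shift_0 atLeast0LessThan)
  finally show ?thesis .
qed

lemma unlift_sig_lift_sig:
  assumes F: "F > 0" and v: "v \<in> sigs n"
  shows "unlift_sig n F (lift_sig n F v) = v"
proof
  fix t
  show "unlift_sig n F (lift_sig n F v) t = v t"
  proof (rule eq_vecI)
    fix c assume "c < dim_vec (v t)"
    hence c: "c < n" using dim_vec_sigs[OF v] by simp
    have "t mod F * n + c < F * n" using c F by (intro block_index_less) auto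
    thus "unlift_sig n F (lift_sig n F v) t $ c = v t $ c"
      using c by (simp add: index_unlift_sig index_lift_sig)
  qed (simp add: unlift_sig_def dim_vec_sigs[OF v])
qed

lemma lift_sig_unlift_sig:
  assumes F: "F > 0" and w: "w \<in> sigs (F * n)"
  shows "lift_sig n F (unlift_sig n F w) = w"
proof
  fix l
  show "lift_sig n F (unlift_sig n F w) l = w l"
  proof (rule eq_vecI)
    fix i assume "i < dim_vec (w l)"
    hence i: "i < F * n" using dim_vec_sigs[OF w] by simp
    hence "0 < n" by (cases n) auto
    with i div_less_of_less_mult[OF i]
    show "lift_sig n F (unlift_sig n F w) l $ i = w l $ i"
      by (simp add: index_unlift_sig index_lift_sig)
  qed (simp add: lift_sig_def dim_vec_sigs[OF w])
qed

lemma lift_op_cong: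
  "(\<And>v. v \<in> sigs n_in \<Longrightarrow> G v = G' v) \<Longrightarrow> lift_op F n_in n_out G w = lift_op F n_in n_out G' w"
  by (simp add: lift_op_def)

lemma lift_op_in_sigs [simp]: "lift_op F n_in n_out G w \<in> sigs (F * n_out)"
  by (simp add: lift_op_def)

lemma lift_op_comp:
  assumes "F > 0" and "\<And>v. v \<in> sigs n_in \<Longrightarrow> H v \<in> sigs n_mid"
  shows "lift_op F n_mid n_out G (lift_op F n_in n_mid H w) = lift_op F n_in n_out (G \<circ> H) w"
  by (simp add: lift_op_def unlift_sig_lift_sig assms)

lemma lift_op_id: "F > 0 \<Longrightarrow> w \<in> sigs (F * n) \<Longrightarrow> lift_op F n n (\<lambda>v. v) w = w"
  by (simp add: lift_op_def lift_sig_unlift_sig)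

lemma lift_sig_sig_add:
  assumes "a \<in> sigs n" "b \<in> sigs n"
  shows "lift_sig n F (sig_add a b) = sig_add (lift_sig n F a) (lift_sig n F b)"
proof
  fix l
  show "lift_sig n F (sig_add a b) l = sig_add (lift_sig n F a) (lift_sig n F b) l"
  proof (rule eq_vecI)
    fix i assume "i < dim_vec (sig_add (lift_sig n F a) (lift_sig n F b) l)"
    hence i: "i < F * n" by (simp add: sig_add_def lift_sig_def)
    hence "i mod n < n" by (cases n) auto
    with i show "lift_sig n F (sig_add a b) l $ i = sig_add (lift_sig n F a) (lift_sig n F b) l $ i"
      using dim_vec_sigs[OF assms(1)] dim_vec_sigs[OF assms(2)]
      by (simp add: sig_add_def index_lift_sig)
  qed (simp add: sig_add_def lift_sig_def)
qed

lemma lift_op_sig_add: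
  assumes "\<And>v. v \<in> sigs n_in \<Longrightarrow> G v \<in> sigs n_out" "\<And>v. v \<in> sigs n_in \<Longrightarrow> H v \<in> sigs n_out"
  shows "lift_op F n_in n_out (\<lambda>v. sig_add (G v) (H v)) w
    = sig_add (lift_op F n_in n_out G w) (lift_op F n_in n_out H w)"
  by (simp add: lift_op_def lift_sig_sig_add assms)

lemma inv_into_lift_op:
  assumes F: "F > 0" and G: "bij_betw G (sigs n) (sigs n)" and w: "w \<in> sigs (F * n)"
  shows "inv_into (sigs (F * n)) (lift_op F n n (inv_into (sigs n) G)) w = lift_op F n n G w"
proof -
  let ?S = "inv_into (sigs n) G"
  have S_in: "?S v \<in> sigs n" if "v \<in> sigs n" for v
    using bij_betw_apply[OF bij_betw_inv_into[OF G]] that .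
  have G_in: "G v \<in> sigs n" if "v \<in> sigs n" for v
    using bij_betw_apply[OF G] that .
  have "lift_op F n n G (lift_op F n n ?S x) = x" if "x \<in> sigs (F * n)" for x
  proof -
    have "lift_op F n n G (lift_op F n n ?S x) = lift_op F n n (G \<circ> ?S) x"
      by (rule lift_op_comp[OF F S_in])
    also have "\<dots> = lift_op F n n (\<lambda>v. v) x"
      using bij_betw_inv_into_right[OF G] by (intro lift_op_cong) simp
    finally show ?thesis using lift_op_id[OF F that] by simp
  qed
  hence inj: "inj_on (lift_op F n n ?S) (sigs (F * n))"
    by (rule inj_on_inverseI[where g = "lift_op F n n G"])
  have "lift_op F n n ?S (lift_op F n n G w) = lift_op F n n (?S \<circ> G) w"
    by (rule lift_op_comp[OF F G_in])
  also have "\<dots> = lift_op F n n (\<lambda>v. v) w"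
    using bij_betw_inv_into_left[OF G] by (intro lift_op_cong) simp
  finally have "lift_op F n n ?S (lift_op F n n G w) = w" using lift_op_id[OF F w] by simp
  thus ?thesis by (intro inv_into_f_eq[OF inj]) simp_all
qed

lemma lti_op_sig_add:
  assumes "v \<in> sigs n_in" "w \<in> sigs n_in"
  shows "lti_op n_out n_in H (sig_add v w) = sig_add (lti_op n_out n_in H v) (lti_op n_out n_in H w)"
proof
  fix t
  show "lti_op n_out n_in H (sig_add v w) t = sig_add (lti_op n_out n_in H v) (lti_op n_out n_in H w) t"
  proof (rule eq_vecI)
    fix i assume "i < dim_vec (sig_add (lti_op n_out n_in H v) (lti_op n_out n_in H w) t)"
    hence i: "i < n_out" by (simp add: sig_add_def lti_op_def)
    have "lti_op n_out n_in H (sig_add v w) t $ i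
        = (\<Sum>s\<le>t. \<Sum>j<n_in. H (t - s) $$ (i, j) * v s $ j + H (t - s) $$ (i, j) * w s $ j)"
      using i dim_vec_sigs[OF assms(2)]
      by (auto simp: index_lti_op sig_add_def distrib_left intro!: sum.cong)
    thus "lti_op n_out n_in H (sig_add v w) t $ i = sig_add (lti_op n_out n_in H v) (lti_op n_out n_in H w) t $ i"
      using i by (simp add: index_lti_op sig_add_def sum.distrib)
  qed (simp add: sig_add_def lti_op_def)
qed

text \<open>Block \<open>(i, k)\<close> of the lag-\<open>d\<close> kernel is \<open>H (d F + i - k)\<close>: output sample \<open>l F + i\<close> sees input
  sample \<open>(l - d) F + k\<close>.\<close>

definition lifted_kernel :: "nat \<Rightarrow> nat \<Rightarrow> nat \<Rightarrow> (nat \<Rightarrow> real mat) \<Rightarrow> nat \<Rightarrow> real mat" where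
  "lifted_kernel F n_out n_in H d = mat (F * n_out) (F * n_in) (\<lambda>(r, c).
     if c div n_in \<le> d * F + r div n_out
     then H (d * F + r div n_out - c div n_in) $$ (r mod n_out, c mod n_in) else 0)"

lemma sum_atMost_blocks:
  fixes f :: "nat \<Rightarrow> 'a :: comm_monoid_add"
  assumes "N < Suc l * F"
  shows "(\<Sum>s\<le>N. f s) = (\<Sum>k\<le>l. \<Sum>b<F. if k * F + b \<le> N then f (k * F + b) else 0)"
proof -
  have "(\<Sum>s\<le>N. f s) = (\<Sum>s<Suc l * F. if s \<le> N then f s else 0)"
    using assms by (intro sum.mono_neutral_cong_left) auto
  also have "\<dots> = (\<Sum>k\<le>l. \<Sum>b<F. if k * F + b \<le> N then f (k * F + b) else 0)"
    unfolding sum_lessThan_mult_blocks lessThan_Suc_atMost ..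
  finally show ?thesis .
qed

lemma lifted_kernel_row:
  assumes "k \<le> l" and "b < F" and "r < F * n_out"
  shows "(\<Sum>j<n_in. lifted_kernel F n_out n_in H (l - k) $$ (r, b * n_in + j) * x j)
    = (if k * F + b \<le> l * F + r div n_out
       then \<Sum>j<n_in. H (l * F + r div n_out - (k * F + b)) $$ (r mod n_out, j) * x j else 0)"
proof -
  have "k * F \<le> l * F" using assms(1) by simp
  hence "b \<le> (l - k) * F + r div n_out \<longleftrightarrow> k * F + b \<le> l * F + r div n_out"
    and "(l - k) * F + r div n_out - b = l * F + r div n_out - (k * F + b)"
    unfolding diff_mult_distrib by linarith+
  thus ?thesis using assms(2,3) by (auto simp: lifted_kernel_def block_index_less intro!: sum.cong)
qed

lemma lift_op_lti_op:
  assumes F: "F > 0"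
  shows "lift_op F n_in n_out (lti_op n_out n_in H) = lti_op (F * n_out) (F * n_in) (lifted_kernel F n_out n_in H)"
proof (intro ext eq_vecI)
  fix w l r
  assume "r < dim_vec (lti_op (F * n_out) (F * n_in) (lifted_kernel F n_out n_in H) w l)"
  hence r: "r < F * n_out" by (simp add: lti_op_def)
  hence r_mod: "r mod n_out < n_out" by (cases n_out) auto
  define N where "N = l * F + r div n_out"
  define g where "g s = (\<Sum>j<n_in. H (N - s) $$ (r mod n_out, j) * w (s div F) $ (s mod F * n_in + j))" for s
  have N: "N < Suc l * F" using div_less_of_less_mult[OF r] unfolding N_def by simp
  have "lift_op F n_in n_out (lti_op n_out n_in H) w l $ r = (\<Sum>s\<le>N. g s)"
    using r r_mod by (simp add: lift_op_def index_lift_sig index_lti_op index_unlift_sig N_def g_def)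
  also have "\<dots> = (\<Sum>k\<le>l. \<Sum>b<F. if k * F + b \<le> N then g (k * F + b) else 0)"
    by (rule sum_atMost_blocks[OF N])
  also have "\<dots> = (\<Sum>k\<le>l. \<Sum>c<F * n_in. lifted_kernel F n_out n_in H (l - k) $$ (r, c) * w k $ c)"
  proof (rule sum.cong[OF refl])
    fix k assume "k \<in> {..l}"
    hence k: "k \<le> l" by simp
    have "(\<Sum>b<F. if k * F + b \<le> N then g (k * F + b) else 0)
        = (\<Sum>b<F. \<Sum>j<n_in. lifted_kernel F n_out n_in H (l - k) $$ (r, b * n_in + j) * w k $ (b * n_in + j))"
      using k r by (intro sum.cong refl) (auto simp: lifted_kernel_row g_def N_def)
    also have "\<dots> = (\<Sum>c<F * n_in. lifted_kernel F n_out n_in H (l - k) $$ (r, c) * w k $ c)"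
      by (rule sum_lessThan_mult_blocks[symmetric])
    finally show "(\<Sum>b<F. if k * F + b \<le> N then g (k * F + b) else 0)
        = (\<Sum>c<F * n_in. lifted_kernel F n_out n_in H (l - k) $$ (r, c) * w k $ c)" .
  qed
  also have "\<dots> = lti_op (F * n_out) (F * n_in) (lifted_kernel F n_out n_in H) w l $ r"
    using r by (simp add: index_lti_op)
  finally show "lift_op F n_in n_out (lti_op n_out n_in H) w l $ r
      = lti_op (F * n_out) (F * n_in) (lifted_kernel F n_out n_in H) w l $ r" .
qed (simp add: lift_op_def lti_op_def)

text \<open>The downsampler reads only the first sample of each input block, and the hold repeats the
  controller output over the whole output block.\<close>

definition lifted_zoh_kernel :: "nat \<Rightarrow> nat \<Rightarrow> nat \<Rightarrow> (nat \<Rightarrow> real mat) \<Rightarrow> nat \<Rightarrow> real mat" where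
  "lifted_zoh_kernel F n_out n_in K d =
     mat (F * n_out) (F * n_in) (\<lambda>(r, c). if c < n_in then K d $$ (r mod n_out, c) else 0)"

lemma lift_op_zoh_lti_op_downsample:
  assumes F: "F > 0"
  shows "lift_op F n_in n_out (\<lambda>v. zoh F (lti_op n_out n_in K (downsample F v)))
    = lti_op (F * n_out) (F * n_in) (lifted_zoh_kernel F n_out n_in K)"
proof (intro ext eq_vecI)
  fix w l r
  assume "r < dim_vec (lti_op (F * n_out) (F * n_in) (lifted_zoh_kernel F n_out n_in K) w l)"
  hence r: "r < F * n_out" by simp
  hence r_mod: "r mod n_out < n_out" by (cases n_out) auto
  have in_range: "c < F * n_in" if "c < n_in" for c
    using that F by (metis less_le_trans mult_le_mono1 mult_1 Suc_leI One_nat_def)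
  have block: "(l * F + r div n_out) div F = l"
    using div_less_of_less_mult[OF r] by simp
  have "lift_op F n_in n_out (\<lambda>v. zoh F (lti_op n_out n_in K (downsample F v))) w l $ r
      = (\<Sum>s\<le>l. \<Sum>j<n_in. K (l - s) $$ (r mod n_out, j) * w s $ j)"
    using r r_mod F
    by (simp add: lift_op_def index_lift_sig zoh_def block index_lti_op downsample_def index_unlift_sig)
  also have "\<dots> = (\<Sum>s\<le>l. \<Sum>c<F * n_in. lifted_zoh_kernel F n_out n_in K (l - s) $$ (r, c) * w s $ c)"
    using r in_range F
    by (intro sum.cong[OF refl] sum.mono_neutral_cong_left) (auto simp: lifted_zoh_kernel_def)
  also have "\<dots> = lti_op (F * n_out) (F * n_in) (lifted_zoh_kernel F n_out n_in K) w l $ r"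
    using r by (simp add: index_lti_op)
  finally show "lift_op F n_in n_out (\<lambda>v. zoh F (lti_op n_out n_in K (downsample F v))) w l $ r
      = lti_op (F * n_out) (F * n_in) (lifted_zoh_kernel F n_out n_in K) w l $ r" .
qed (simp add: lift_op_def)

section \<open>The lifted closed loop\<close>

lemma zoh_in_sigs [simp]: "v \<in> sigs n \<Longrightarrow> zoh F v \<in> sigs n"
  by (simp add: sigs_def zoh_def)

lemma lti_op_loop_in:
  assumes "u \<in> sigs m"
  shows "lti_op p m Pk (loop_in F m p Pk Kk u) = loop_out F m p Pk Kk (lti_op p m Pk u)"
  unfolding loop_in_def loop_out_def using assms by (simp add: lti_op_sig_add)

lemma J_LPTV_loop_in:
  assumes "inj_on (loop_out F m p Pk Kk) (sigs p)" and "u \<in> sigs m"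
  shows "J_LPTV F m p Pk Kk (loop_in F m p Pk Kk u) = lti_op p m Pk u"
  using assms by (simp add: J_LPTV_def lti_op_loop_in inv_into_f_f)

lemma S_LPTV_in_sigs:
  assumes "bij_betw (loop_in F m p Pk Kk) (sigs m) (sigs m)" and "x \<in> sigs m"
  shows "S_LPTV F m p Pk Kk x \<in> sigs m"
  unfolding S_LPTV_def by (rule bij_betw_apply[OF bij_betw_inv_into[OF assms(1)] assms(2)])

lemma loop_in_S_LPTV:
  assumes "bij_betw (loop_in F m p Pk Kk) (sigs m) (sigs m)" and "x \<in> sigs m"
  shows "loop_in F m p Pk Kk (S_LPTV F m p Pk Kk x) = x"
  unfolding S_LPTV_def by (rule bij_betw_inv_into_right[OF assms])

lemma J_LPTV_eq_lti_op_S_LPTV: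
  assumes "bij_betw (loop_in F m p Pk Kk) (sigs m) (sigs m)"
    and "inj_on (loop_out F m p Pk Kk) (sigs p)" and "x \<in> sigs m"
  shows "J_LPTV F m p Pk Kk x = lti_op p m Pk (S_LPTV F m p Pk Kk x)"
  using J_LPTV_loop_in[OF assms(2) S_LPTV_in_sigs[OF assms(1,3)]] loop_in_S_LPTV[OF assms(1,3)] by simp

lemma lift_op_loop_in:
  assumes F: "F > 0" and w: "w \<in> sigs (F * m)"
  shows "lift_op F m m (loop_in F m p Pk Kk) w = sig_add w
    (lti_op (F * m) (F * p) (lifted_zoh_kernel F m p Kk) (lti_op (F * p) (F * m) (lifted_kernel F p m Pk) w))"
proof -
  have "lift_op F m m (loop_in F m p Pk Kk) w = sig_add (lift_op F m m (\<lambda>v. v) w)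
      (lift_op F m m ((\<lambda>v. zoh F (lti_op m p Kk (downsample F v))) \<circ> lti_op p m Pk) w)"
    unfolding loop_in_def by (subst lift_op_sig_add) (simp_all add: comp_def)
  also have "lift_op F m m ((\<lambda>v. zoh F (lti_op m p Kk (downsample F v))) \<circ> lti_op p m Pk) w
      = lift_op F p m (\<lambda>v. zoh F (lti_op m p Kk (downsample F v))) (lift_op F m p (lti_op p m Pk) w)"
    by (rule lift_op_comp[OF F, symmetric]) simp
  also have "\<dots> = lti_op (F * m) (F * p) (lifted_zoh_kernel F m p Kk) (lti_op (F * p) (F * m) (lifted_kernel F p m Pk) w)"
    by (simp add: lift_op_lti_op[OF F] lift_op_zoh_lti_op_downsample[OF F])
  finally show ?thesis by (simp add: lift_op_id[OF F w])
qed

lemma lift_op_plant_eq_J_LPTV_inv_S_LPTV: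
  assumes F: "F > 0" and wp_in: "bij_betw (loop_in F m p Pk Kk) (sigs m) (sigs m)"
    and inj_out: "inj_on (loop_out F m p Pk Kk) (sigs p)" and w: "w \<in> sigs (F * m)"
  shows "lift_op F m p (lti_op p m Pk) w
    = lift_op F m p (J_LPTV F m p Pk Kk) (inv_into (sigs (F * m)) (lift_op F m m (S_LPTV F m p Pk Kk)) w)"
proof -
  have "inv_into (sigs (F * m)) (lift_op F m m (S_LPTV F m p Pk Kk)) w = lift_op F m m (loop_in F m p Pk Kk) w"
    unfolding S_LPTV_def by (rule inv_into_lift_op[OF F wp_in w])
  moreover have "lift_op F m p (J_LPTV F m p Pk Kk) (lift_op F m m (loop_in F m p Pk Kk) w)
      = lift_op F m p (J_LPTV F m p Pk Kk \<circ> loop_in F m p Pk Kk) w"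
    by (rule lift_op_comp[OF F bij_betw_apply[OF wp_in]])
  moreover have "\<dots> = lift_op F m p (lti_op p m Pk) w"
    by (rule lift_op_cong) (simp add: J_LPTV_loop_in[OF inj_out])
  ultimately show ?thesis by simp
qed

lemma lift_op_J_LPTV:
  assumes F: "F > 0" and wp_in: "bij_betw (loop_in F m p Pk Kk) (sigs m) (sigs m)"
    and inj_out: "inj_on (loop_out F m p Pk Kk) (sigs p)"
  shows "lift_op F m p (J_LPTV F m p Pk Kk) w
    = lti_op (F * p) (F * m) (lifted_kernel F p m Pk) (lift_op F m m (S_LPTV F m p Pk Kk) w)"
proof -
  have "lift_op F m p (J_LPTV F m p Pk Kk) w = lift_op F m p (lti_op p m Pk \<circ> S_LPTV F m p Pk Kk) w"
    by (rule lift_op_cong) (simp add: J_LPTV_eq_lti_op_S_LPTV[OF wp_in inj_out])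
  also have "\<dots> = lift_op F m p (lti_op p m Pk) (lift_op F m m (S_LPTV F m p Pk Kk) w)"
    by (rule lift_op_comp[OF F S_LPTV_in_sigs[OF wp_in], symmetric])
  finally show ?thesis by (simp only: lift_op_lti_op[OF F])
qed

lemma lift_op_S_LPTV_closed_loop:
  assumes F: "F > 0" and wp_in: "bij_betw (loop_in F m p Pk Kk) (sigs m) (sigs m)" and w: "w \<in> sigs (F * m)"
  shows "sig_add (lift_op F m m (S_LPTV F m p Pk Kk) w) (lti_op (F * m) (F * p) (lifted_zoh_kernel F m p Kk)
    (lti_op (F * p) (F * m) (lifted_kernel F p m Pk) (lift_op F m m (S_LPTV F m p Pk Kk) w))) = w"
    (is "?lhs = w")
proof -
  have "?lhs = lift_op F m m (loop_in F m p Pk Kk \<circ> S_LPTV F m p Pk Kk) w"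
    unfolding lift_op_loop_in[OF F lift_op_in_sigs, symmetric]
    by (rule lift_op_comp[OF F S_LPTV_in_sigs[OF wp_in]])
  also have "\<dots> = lift_op F m m (\<lambda>v. v) w"
    by (rule lift_op_cong) (simp add: loop_in_S_LPTV[OF wp_in])
  also have "\<dots> = w" by (rule lift_op_id[OF F w])
  finally show ?thesis .
qed

section \<open>Transfer matrices\<close>

definition tf_kernel :: "nat \<Rightarrow> nat \<Rightarrow> (nat \<Rightarrow> real mat) \<Rightarrow> complex fps mat" where
  "tf_kernel n_out n_in H = mat n_out n_in (\<lambda>(i, j). Abs_fps (\<lambda>k. complex_of_real (H k $$ (i, j))))"

lemma impulse_in_sigs [simp]: "impulse n j \<in> sigs n"
  by (simp add: sigs_def impulse_def)

lemma tf_kernel_carrier [simp]: "tf_kernel n_out n_in H \<in> carrier_mat n_out n_in"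
  by (simp add: tf_kernel_def)

lemma tf_carrier [simp]: "tf n_in n_out G \<in> carrier_mat n_out n_in"
  by (simp add: tf_def)

lemma convolution_reverse:
  fixes k :: nat
  shows "(\<Sum>s\<le>k. f (k - s) * g s) = (\<Sum>a=0..k. f a * g (k - a) :: 'a :: comm_semiring_0)"
proof -
  have "(\<Sum>a=0..k. f a * g (k - a)) = (\<Sum>s=0..k. f (k + 0 - s) * g (k - (k + 0 - s)))"
    by (rule sum.atLeastAtMost_rev)
  also have "\<dots> = (\<Sum>s\<le>k. f (k - s) * g s)"
    by (auto simp: atLeast0AtMost intro: sum.cong)
  finally show ?thesis ..
qed

lemma tf_lti_op:
  "tf n_in n_out (\<lambda>e. lti_op n_out n_mid H (Q e)) = tf_kernel n_out n_mid H * tf n_in n_mid Q"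
proof (rule eq_matI)
  fix i j assume "i < dim_row (tf_kernel n_out n_mid H * tf n_in n_mid Q)"
    "j < dim_col (tf_kernel n_out n_mid H * tf n_in n_mid Q)"
  hence i: "i < n_out" and j: "j < n_in" by (auto simp: tf_def tf_kernel_def)
  let ?h = "\<lambda>s l. complex_of_real (H s $$ (i, l))"
  let ?q = "\<lambda>s l. complex_of_real (Q (impulse n_in j) s $ l)"
  show "tf n_in n_out (\<lambda>e. lti_op n_out n_mid H (Q e)) $$ (i, j)
      = (tf_kernel n_out n_mid H * tf n_in n_mid Q) $$ (i, j)"
  proof (rule fps_ext)
    fix k
    have "tf n_in n_out (\<lambda>e. lti_op n_out n_mid H (Q e)) $$ (i, j) $ k
        = (\<Sum>l<n_mid. \<Sum>s\<le>k. ?h (k - s) l * ?q s l)"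
      using i j by (simp add: tf_def index_lti_op sum.swap[of _ "{..k}"])
    also have "\<dots> = (\<Sum>l<n_mid. \<Sum>a=0..k. ?h a l * ?q (k - a) l)"
      by (rule sum.cong[OF refl], rule convolution_reverse)
    also have "\<dots> = (tf_kernel n_out n_mid H * tf n_in n_mid Q) $$ (i, j) $ k"
      using i j
      by (simp add: tf_kernel_def tf_def scalar_prod_def fps_sum_nth fps_mult_nth atLeast0LessThan)
    finally show "tf n_in n_out (\<lambda>e. lti_op n_out n_mid H (Q e)) $$ (i, j) $ k
        = (tf_kernel n_out n_mid H * tf n_in n_mid Q) $$ (i, j) $ k" .
  qed
qed (auto simp: tf_def tf_kernel_def)

lemma tf_id: "tf n n (\<lambda>e. e) = 1\<^sub>m n"
  by (rule eq_matI) (auto intro!: fps_ext simp: tf_def impulse_def)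

lemma tf_sig_add:
  assumes "\<And>e t. B e t \<in> carrier_vec n_out"
  shows "tf n_in n_out (\<lambda>e. sig_add (A e) (B e)) = tf n_in n_out A + tf n_in n_out B"
  by (rule eq_matI) (auto intro!: fps_ext simp: tf_def sig_add_def carrier_vecD[OF assms])

lemma tf_cong:
  "(\<And>j. j < n_in \<Longrightarrow> G (impulse n_in j) = G' (impulse n_in j)) \<Longrightarrow> tf n_in n_out G = tf n_in n_out G'"
  unfolding tf_def by (rule cong_mat) auto

definition subst_zF :: "nat \<Rightarrow> complex fps \<Rightarrow> complex fls" where
  "subst_zF F f = fps_to_fls (f oo fps_X ^ F)"

lemma tf_zF_eq_map_mat: "tf_zF F n_in n_out G = map_mat (subst_zF F) (tf n_in n_out G)"
  by (simp add: tf_zF_def subst_zF_def[abs_def])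

lemma semiring_hom_subst_zF:
  assumes "F > 0" shows "semiring_hom (subst_zF F)"
proof
  have X: "(fps_X ^ F :: complex fps) $ 0 = 0" using assms by simp
  fix f g :: "complex fps"
  show "subst_zF F (f + g) = subst_zF F f + subst_zF F g"
    by (simp add: subst_zF_def fps_compose_add_distrib)
  show "subst_zF F (f * g) = subst_zF F f * subst_zF F g"
    by (simp add: subst_zF_def fps_compose_mult_distrib[OF X] fls_times_fps_to_fls)
qed (simp_all add: subst_zF_def)

lemma (in semiring_hom) mat_hom_add:
  "A \<in> carrier_mat nr nc \<Longrightarrow> B \<in> carrier_mat nr nc \<Longrightarrow> mat\<^sub>h (A + B) = mat\<^sub>h A + mat\<^sub>h B"
  by (intro eq_matI) (auto simp: hom_add)

lemma tf_zF_lti_op: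
  assumes "F > 0"
  shows "tf_zF F n_in n_out (\<lambda>e. lti_op n_out n_mid H (Q e))
    = map_mat (subst_zF F) (tf_kernel n_out n_mid H) * tf_zF F n_in n_mid Q"
proof -
  interpret semiring_hom "subst_zF F" by (rule semiring_hom_subst_zF[OF assms])
  show ?thesis unfolding tf_zF_eq_map_mat tf_lti_op by (rule mat_hom_mult[OF tf_kernel_carrier tf_carrier])
qed

lemma tf_zF_id: "F > 0 \<Longrightarrow> tf_zF F n n (\<lambda>e. e) = 1\<^sub>m n"
  unfolding tf_zF_eq_map_mat tf_id by (rule semiring_hom.mat_hom_one[OF semiring_hom_subst_zF])

lemma tf_zF_sig_add:
  assumes "F > 0" and "\<And>e t. B e t \<in> carrier_vec n_out"
  shows "tf_zF F n_in n_out (\<lambda>e. sig_add (A e) (B e)) = tf_zF F n_in n_out A + tf_zF F n_in n_out B"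
  unfolding tf_zF_eq_map_mat tf_sig_add[OF assms(2)]
  by (rule semiring_hom.mat_hom_add[OF semiring_hom_subst_zF[OF assms(1)] tf_carrier tf_carrier])

lemma tf_zF_cong:
  "(\<And>e. e \<in> sigs n_in \<Longrightarrow> G e = G' e) \<Longrightarrow> tf_zF F n_in n_out G = tf_zF F n_in n_out G'"
  unfolding tf_zF_def by (metis tf_cong impulse_in_sigs)

lemma tf_zF_lifted_closed_loop:
  fixes Pl Jl Sl :: "signal \<Rightarrow> signal" and A B :: "nat \<Rightarrow> real mat"
  assumes F: "F > 0"
    and Pl: "\<And>e. e \<in> sigs N \<Longrightarrow> Pl e = lti_op R N B e"
    and Jl: "\<And>e. e \<in> sigs N \<Longrightarrow> Jl e = lti_op R N B (Sl e)"
    and Sl: "\<And>e. e \<in> sigs N \<Longrightarrow> sig_add (Sl e) (lti_op N R A (lti_op R N B (Sl e))) = e"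
  defines "A' \<equiv> map_mat (subst_zF F) (tf_kernel N R A)"
    and "B' \<equiv> map_mat (subst_zF F) (tf_kernel R N B)"
  shows "tf_zF F N N Sl + A' * (B' * tf_zF F N N Sl) = 1\<^sub>m N"
    and "tf_zF F N R Jl = B' * tf_zF F N N Sl"
    and "tf_zF F N R Pl = B'"
proof -
  have "1\<^sub>m N = tf_zF F N N (\<lambda>e. sig_add (Sl e) (lti_op N R A (lti_op R N B (Sl e))))"
    unfolding tf_zF_id[OF F, symmetric] using Sl by (intro tf_zF_cong) simp
  also have "\<dots> = tf_zF F N N Sl + tf_zF F N N (\<lambda>e. lti_op N R A (lti_op R N B (Sl e)))"
    by (rule tf_zF_sig_add[OF F]) simp
  finally show "tf_zF F N N Sl + A' * (B' * tf_zF F N N Sl) = 1\<^sub>m N"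
    by (simp add: tf_zF_lti_op[OF F] A'_def B'_def)
  have "tf_zF F N R Jl = tf_zF F N R (\<lambda>e. lti_op R N B (Sl e))"
    using Jl by (intro tf_zF_cong) simp
  thus "tf_zF F N R Jl = B' * tf_zF F N N Sl" by (simp add: tf_zF_lti_op[OF F] B'_def)
  have "tf_zF F N R Pl = tf_zF F N R (\<lambda>e. lti_op R N B ((\<lambda>e. e) e))"
    using Pl by (intro tf_zF_cong) simp
  thus "tf_zF F N R Pl = B'"
    unfolding tf_zF_lti_op[OF F] tf_zF_id[OF F] B'_def
    by (simp add: right_mult_one_mat[of _ R N])
qed

section \<open>Frequency lifting\<close>

lemma mat_inverse_eq_Some:
  fixes A B :: "'a :: field mat"
  assumes A: "A \<in> carrier_mat n n" and B: "B \<in> carrier_mat n n" and AB: "A * B = 1\<^sub>m n"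
  shows "mat_inverse A = Some B"
proof (cases "mat_inverse A")
  case None
  have "det A \<noteq> 0" using det_mult[OF A B] AB by auto
  thus ?thesis using mat_inverse(1)[OF A None, of "()"] det_non_zero_imp_unit[OF A, where b = "()"] by blast
next
  case (Some C)
  hence C: "C \<in> carrier_mat n n" and CA: "C * A = 1\<^sub>m n" using mat_inverse(2)[OF A] by auto
  have "C = C * (A * B)" using C AB by simp
  also have "\<dots> = C * A * B" using C A B by (rule assoc_mult_mat[symmetric])
  also have "\<dots> = B" using B CA by simp
  finally show ?thesis using Some by simp
qed

lemma conjugated_inverse:
  fixes T C M M' B Q :: "'a :: field mat"
  assumes T: "T \<in> carrier_mat n n" and C: "C \<in> carrier_mat n n" and CT: "C * T = 1\<^sub>m n"
    and M: "M \<in> carrier_mat n n" and M': "M' \<in> carrier_mat n n" and MM': "M * M' = 1\<^sub>m n"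
    and B: "B \<in> carrier_mat r n" and Q: "Q \<in> carrier_mat r r"
  shows "mat_inverse (M * T * M') = Some (M * C * M')"
    and "Q * (B * T) * M' * (M * C * M') = Q * B * M'"
proof -
  interpret R: ring "ring_mat TYPE('a) n ()" by (rule ring_mat)
  note assoc = R.m_assoc[unfolded ring_mat_simps]
  have M'M: "M' * M = 1\<^sub>m n" by (rule mat_mult_left_right_inverse[OF M M' MM'])
  have TC: "T * C = 1\<^sub>m n" by (rule mat_mult_left_right_inverse[OF C T CT])
  have "M' * (M * C * M') = M' * M * C * M'" using M M' C by (simp add: assoc)
  hence M'_MCM': "M' * (M * C * M') = C * M'" using C M'M by simp
  have "T * (C * M') = T * C * M'" using T C M' by (simp add: assoc)
  hence TCM': "T * (C * M') = M'" using M' TC by simp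
  show "mat_inverse (M * T * M') = Some (M * C * M')"
  proof (rule mat_inverse_eq_Some)
    have "M * T * M' * (M * C * M') = M * T * (M' * (M * C * M'))"
      by (rule assoc) (use M T M' C in simp_all)
    also have "\<dots> = M * (T * (C * M'))"
      unfolding M'_MCM' by (rule assoc) (use M T M' C in simp_all)
    finally show "M * T * M' * (M * C * M') = 1\<^sub>m n"
      unfolding TCM' MM' .
  qed (use T C M M' in auto)
  have BT: "B * T \<in> carrier_mat r n" and CM': "C * M' \<in> carrier_mat n n"
    and MCM': "M * C * M' \<in> carrier_mat n n" using B T C M M' by simp_all
  have "Q * (B * T) * M' * (M * C * M') = Q * (B * T) * (C * M')"
    using assoc_mult_mat[OF mult_carrier_mat[OF Q BT] M' MCM'] by (simp only: M'_MCM')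
  also have "\<dots> = Q * (B * (T * (C * M')))"
    by (simp only: assoc_mult_mat[OF Q BT CM'] assoc_mult_mat[OF B T CM'])
  also have "\<dots> = Q * B * M'"
    by (simp only: TCM' assoc_mult_mat[OF Q B M'])
  finally show "Q * (B * T) * M' * (M * C * M') = Q * B * M'" .
qed

lemma phi_power: "phi F ^ k = cis (2 * pi * real k / real F)"
  unfolding phi_def DeMoivre by (simp add: mult.commute)

lemma phi_nonzero [simp]: "phi F \<noteq> 0"
  by (simp add: phi_def)

lemma phi_power_inj:
  assumes "F > 0" "i < F" "l < F" "phi F ^ i = phi F ^ l"
  shows "i = l"
  using bij_betw_imp_inj_on[OF bij_betw_roots_unity[OF assms(1)]] assms(2-4)
  unfolding phi_power inj_on_def by blast

lemma sum_phi_power_ratio: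
  assumes F: "F > 0" and i: "i < F" and l: "l < F"
  shows "(\<Sum>b<F. (phi F ^ l / phi F ^ i) ^ b) = (if i = l then of_nat F else 0)"
proof (cases "i = l")
  case False
  define \<rho> where "\<rho> = phi F ^ l / phi F ^ i"
  have "phi F ^ F = 1" using F by (simp add: phi_power)
  hence "(phi F ^ k) ^ F = 1" for k
    by (metis mult.commute power_mult power_one)
  hence "\<rho> ^ F = 1" unfolding \<rho>_def power_divide by simp
  moreover have "\<rho> \<noteq> 1"
    using phi_power_inj[OF F i l] False unfolding \<rho>_def by auto
  ultimately have "(\<Sum>b<F. \<rho> ^ b) = 0" by (simp add: geometric_sum)
  thus ?thesis using False unfolding \<rho>_def by simp
qed simp

lemma fls_const_sum: "fls_const (sum f A) = (\<Sum>a\<in>A. fls_const (f a))"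
  by (induction A rule: infinite_finite_induct) (simp_all flip: fls_plus_const)

definition Mz_inv :: "nat \<Rightarrow> nat \<Rightarrow> complex fls mat" where
  "Mz_inv F n = mat (F * n) (F * n) (\<lambda>(r, c).
     if r mod n = c mod n
     then fls_const (phi F ^ ((r div n) * (c div n)) / of_nat F) * inverse fls_X ^ (r div n)
     else 0)"

lemma dim_Mz [simp]: "dim_row (Mz F n) = F * n" "dim_col (Mz F n) = F * n"
  by (simp_all add: Mz_def)

lemma dim_Mz_inv [simp]: "dim_row (Mz_inv F n) = F * n" "dim_col (Mz_inv F n) = F * n"
  by (simp_all add: Mz_inv_def)

lemma Mz_carrier [simp]: "Mz F n \<in> carrier_mat (F * n) (F * n)"
  by (simp add: Mz_def)

lemma Mz_inv_carrier [simp]: "Mz_inv F n \<in> carrier_mat (F * n) (F * n)"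
  by (simp add: Mz_inv_def)

lemma Mz_Mz_inv_entry:
  assumes r: "r < F * n" and r': "r' < F * n" and b: "b < F" and j: "j < n"
  shows "Mz F n $$ (r, b * n + j) * Mz_inv F n $$ (b * n + j, r')
    = (if j = r mod n \<and> j = r' mod n
       then fls_const ((phi F ^ (r' div n) / phi F ^ (r div n)) ^ b / of_nat F) else 0)"
proof -
  have c: "b * n + j < F * n" by (rule block_index_less[OF j b])
  have X: "fls_X ^ b * inverse fls_X ^ b = (1 :: complex fls)"
    by (simp flip: power_mult_distrib)
  have coeff: "inverse (phi F) ^ (r div n * b) * (phi F ^ (b * (r' div n)) / of_nat F)
      = (phi F ^ (r' div n) / phi F ^ (r div n)) ^ b / of_nat F"
    by (simp add: power_divide field_simps mult.commute flip: power_mult)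
  have "fls_const (inverse (phi F) ^ (r div n * b)) * fls_X ^ b
      * (fls_const (phi F ^ (b * (r' div n)) / of_nat F) * inverse fls_X ^ b)
    = fls_const ((phi F ^ (r' div n) / phi F ^ (r div n)) ^ b / of_nat F)"
    by (simp add: mult_ac X flip: coeff)
  thus ?thesis using r r' c j by (auto simp: Mz_def Mz_inv_def)
qed

lemma Mz_mult_Mz_inv:
  assumes F: "F > 0"
  shows "Mz F n * Mz_inv F n = 1\<^sub>m (F * n)"
proof (rule eq_matI)
  fix r r' assume "r < dim_row (1\<^sub>m (F * n) :: complex fls mat)" "r' < dim_col (1\<^sub>m (F * n) :: complex fls mat)"
  hence r: "r < F * n" and r': "r' < F * n" by auto
  define i l where "i = r div n" and "l = r' div n"
  define \<rho> where "\<rho> = phi F ^ l / phi F ^ i"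
  have n: "n > 0" using r by (cases n) auto
  have i: "i < F" and l: "l < F"
    using r r' unfolding i_def l_def by (simp_all add: div_less_of_less_mult)
  note entry = Mz_Mz_inv_entry[OF r r', folded i_def l_def, folded \<rho>_def]
  have "(Mz F n * Mz_inv F n) $$ (r, r') = (\<Sum>c<F * n. Mz F n $$ (r, c) * Mz_inv F n $$ (c, r'))"
    using r r' by (auto simp: scalar_prod_def atLeast0LessThan intro!: sum.cong)
  also have "\<dots> = (\<Sum>b<F. if r mod n = r' mod n then fls_const (\<rho> ^ b / of_nat F) else 0)"
    unfolding sum_lessThan_mult_blocks
  proof (rule sum.cong[OF refl])
    fix b assume "b \<in> {..<F}"
    hence "(\<Sum>j<n. Mz F n $$ (r, b * n + j) * Mz_inv F n $$ (b * n + j, r'))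
        = (\<Sum>j<n. if j = r mod n then (if r mod n = r' mod n then fls_const (\<rho> ^ b / of_nat F) else 0) else 0)"
      by (intro sum.cong refl) (auto simp: entry)
    also have "\<dots> = (if r mod n = r' mod n then fls_const (\<rho> ^ b / of_nat F) else 0)"
      using n by simp
    finally show "(\<Sum>j<n. Mz F n $$ (r, b * n + j) * Mz_inv F n $$ (b * n + j, r'))
        = (if r mod n = r' mod n then fls_const (\<rho> ^ b / of_nat F) else 0)" .
  qed
  also have "\<dots> = (if r mod n = r' mod n then fls_const ((\<Sum>b<F. \<rho> ^ b) / of_nat F) else 0)"
    by (simp add: fls_const_sum sum_divide_distrib)
  also have "\<dots> = (if r mod n = r' mod n \<and> i = l then 1 else 0)"
    using F by (simp add: \<rho>_def sum_phi_power_ratio[OF F i l])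
  also have "\<dots> = 1\<^sub>m (F * n) $$ (r, r')"
  proof -
    have "r mod n = r' mod n \<and> r div n = r' div n \<longleftrightarrow> r = r'" by (metis div_mult_mod_eq)
    thus ?thesis using r r' unfolding i_def l_def by simp
  qed
  finally show "(Mz F n * Mz_inv F n) $$ (r, r') = 1\<^sub>m (F * n) $$ (r, r')" .
qed auto

lemma freq_lift_factorization:
  fixes Pl Jl Sl :: "signal \<Rightarrow> signal" and A B :: "complex fls mat"
  assumes F: "F > 0" and A: "A \<in> carrier_mat (F * m) (F * p)" and B: "B \<in> carrier_mat (F * p) (F * m)"
    and loop: "tf_zF F (F * m) (F * m) Sl + A * (B * tf_zF F (F * m) (F * m) Sl) = 1\<^sub>m (F * m)"
    and J: "tf_zF F (F * m) (F * p) Jl = B * tf_zF F (F * m) (F * m) Sl"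
    and P: "tf_zF F (F * m) (F * p) Pl = B"
  shows "\<exists>Sinv. mat_inverse (freq_lift F m m Sl) = Some Sinv
    \<and> freq_lift F m p Pl = freq_lift F m p Jl * Sinv"
proof -
  define N R T where "N = F * m" and "R = F * p" and "T = tf_zF F N N Sl"
  have T: "T \<in> carrier_mat N N" by (simp add: T_def tf_zF_def)
  define C where "C = 1\<^sub>m N + A * B"
  have C: "C \<in> carrier_mat N N" using A B by (simp add: C_def N_def)
  have CT: "C * T = 1\<^sub>m N"
    using T A B loop unfolding N_def R_def T_def C_def
    by (simp add: add_mult_distrib_mat[of _ "F * m" "F * m"] assoc_mult_mat[of _ "F * m" "F * p" _ "F * m" _ "F * m"])
  have Mz_inv: "mat_inverse (Mz F m) = Some (Mz_inv F m)"
    by (rule mat_inverse_eq_Some) (simp_all add: Mz_mult_Mz_inv[OF F])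
  have M: "Mz F m \<in> carrier_mat N N" "Mz_inv F m \<in> carrier_mat N N" "Mz F m * Mz_inv F m = 1\<^sub>m N"
    and Q: "Mz F p \<in> carrier_mat R R"
    by (simp_all add: N_def R_def Mz_mult_Mz_inv[OF F])
  note conj = conjugated_inverse[OF T C CT M B[folded N_def R_def] Q]
  show ?thesis
  proof (intro exI conjI)
    show "mat_inverse (freq_lift F m m Sl) = Some (Mz F m * C * Mz_inv F m)"
      using conj(1) unfolding freq_lift_def Mz_inv option.sel N_def T_def .
    show "freq_lift F m p Pl = freq_lift F m p Jl * (Mz F m * C * Mz_inv F m)"
      using conj(2) unfolding freq_lift_def Mz_inv option.sel J P N_def R_def T_def ..
  qed
qed

theorem theorem1:
  fixes F m p :: nat and Pk Kk :: "nat \<Rightarrow> real mat"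
  assumes F: "F > 0"
    and P_lti: "is_kernel p m Pk"
    and K_lti: "is_kernel m p Kk"
    and wp_out: "bij_betw (loop_out F m p Pk Kk) (sigs p) (sigs p)"
    and wp_in: "bij_betw (loop_in F m p Pk Kk) (sigs m) (sigs m)"
  defines "Pl \<equiv> lift_op F m p (lti_op p m Pk)"
    and "Jl \<equiv> lift_op F m p (J_LPTV F m p Pk Kk)"
    and "Sl \<equiv> lift_op F m m (S_LPTV F m p Pk Kk)"
  shows "(\<forall>w \<in> sigs (F * m). Pl w = Jl (inv_into (sigs (F * m)) Sl w))
    \<and> (\<exists>Sinv. mat_inverse (freq_lift F m m Sl) = Some Sinv
              \<and> freq_lift F m p Pl = freq_lift F m p Jl * Sinv)"
proof
  have inj_out: "inj_on (loop_out F m p Pk Kk) (sigs p)" by (rule bij_betw_imp_inj_on[OF wp_out])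
  show "\<forall>w \<in> sigs (F * m). Pl w = Jl (inv_into (sigs (F * m)) Sl w)"
    unfolding Pl_def Jl_def Sl_def using lift_op_plant_eq_J_LPTV_inv_S_LPTV[OF F wp_in inj_out] by blast
  show "\<exists>Sinv. mat_inverse (freq_lift F m m Sl) = Some Sinv \<and> freq_lift F m p Pl = freq_lift F m p Jl * Sinv"
    unfolding Pl_def Jl_def Sl_def
    using tf_zF_lifted_closed_loop[OF F lift_op_lti_op[OF F, THEN fun_cong]
        lift_op_J_LPTV[OF F wp_in inj_out] lift_op_S_LPTV_closed_loop[OF F wp_in]]
    by (intro freq_lift_factorization[OF F]) simp_all
qed

end
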